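(* Let $m\ge3$ be odd, let $s$ be an even positive integer not divisible by $4$, $n=sm$, and $\Gamma=C_n[mK_1]$. Define $$\eta_1=(t,t,\dots,t)r,\qquad \eta_2=(\gamma_1,\gamma_2,\dots,\gamma_n)z,\qquad H=\langle\eta_1,\eta_2\rangle,$$ where $\gamma_{2i+1}=\gamma_{2i+2}=tc^{i}$ for $0\le i<n/2$ (so $\eta_2=(t,t,tc,tc,tc^2,tc^2,\dots,tc^{-1},tc^{-1})z$). Then $\eta_1$ has order $n$, $\eta_2$ has order $2m$, $\eta_1\eta_2$ has order $2$, and $|H|=2m^2n$.
   Context: $C_n[mK_1]$ is the graph with vertex set $\{1,\dots,n\}\times\{1,\dots,m\}$ in which $(i_1,j_1)$ is adjacent to $(i_2,j_2)$ if and only if $i_1\equiv i_2\pm1\pmod n$ (residues mod $n$ taken in $\{1,\dots,n\}$). Permutations act on the right ($x\alpha$ is the image of $x$) and products are composed left to right, both in $S_m$ and in $\mathrm{Aut}(\Gamma)$. For $\alpha_1,\dots,\alpha_n\in S_m$ and a permutation $x$ of $\{1,\dots,n\}$ in the dihedral group $D_n=\langle r,z\rangle$, $(\alpha_1,\dots,\alpha_n)x$ denotes the automorphism of $\Gamma$ mapping $(i,j)\mapsto(ix,\,j\alpha_i)$; $1$ denotes an identity permutation. Here $c=(1\,2\,\cdots\,m)\in S_m$; $t\in S_m$ fixes $1$ and maps $j\mapsto m-j+2$ for $2\le j\le m$; $r$ is the permutation $i\mapsto i+1 \pmod n$ of $\{1,\dots,n\}$; and $z$ fixes $1$ and maps $j\mapsto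 n-j+2$ for $2\le j\le n$. *)

theory Defs
  imports "HOL-Algebra.Algebra"
begin

definition verts :: "nat \<Rightarrow> nat \<Rightarrow> (nat \<times> nat) set" where
  "verts n m = {1..n} \<times> {1..m}"

definition cadj :: "nat \<Rightarrow> nat \<times> nat \<Rightarrow> nat \<times> nat \<Rightarrow> bool" where
  "cadj n u v \<longleftrightarrow> fst u mod n = (fst v + 1) mod n \<or> (fst u + 1) mod n = fst v mod n"

text \<open>NOTE: in BijGroup, the product g \<otimes> f is the
  function composition g \<circ> f (apply f first).\<close>
definition AutC :: "nat \<Rightarrow> nat \<Rightarrow> ((nat \<times> nat) \<Rightarrow> (nat \<times> nat)) monoid" where
  "AutC n m = BijGroup (verts n m) \<lparr>carrier :=
     {f \<in> Bij (verts n m). \<forall>u \<in> verts n m. \<forall>v \<in> verts n m. cadj n u v \<longleftrightarrow> cadj n (f u) (f v)}\<rparr>"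

definition cperm :: "nat \<Rightarrow> nat \<Rightarrow> nat" where
  "cperm m j = j mod m + 1"

definition tperm :: "nat \<Rightarrow> nat \<Rightarrow> nat" where
  "tperm m j = (if j = 1 then 1 else m + 2 - j)"

definition rperm :: "nat \<Rightarrow> nat \<Rightarrow> nat" where
  "rperm n i = i mod n + 1"

definition zperm :: "nat \<Rightarrow> nat \<Rightarrow> nat" where
  "zperm n i = (if i = 1 then 1 else n + 2 - i)"

definition eta1 :: "nat \<Rightarrow> nat \<Rightarrow> (nat \<times> nat) \<Rightarrow> (nat \<times> nat)" where
  "eta1 n m = (\<lambda>v \<in> verts n m. (rperm n (fst v), tperm m (snd v)))"

text \<open>eta2 = (gamma_1,...,gamma_n) z with gamma_(2k+1) = gamma_(2k+2) = t c^k
  (left-to-right product: apply t, then c^k), i.e. gamma_i = t c^((i-1) div 2).\<close>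
definition eta2 :: "nat \<Rightarrow> nat \<Rightarrow> (nat \<times> nat) \<Rightarrow> (nat \<times> nat)" where
  "eta2 n m = (\<lambda>v \<in> verts n m.
      (zperm n (fst v), (cperm m ^^ ((fst v - 1) div 2)) (tperm m (snd v))))"

end

theory Submission
  imports Defs "HOL-Number_Theory.Cong"
begin

(* Write a vertex (i, j) as (a, b) = (i - 1, j - 1) in Z/n x Z/m.  Then eta1 is
   (a, b) |-> (a + 1, -b) and eta2 is (a, b) |-> (-a, a div 2 - b).  When 2m divides n,
   right multiplication by eta1 and eta2 permutes the 2 n m^2 pairwise distinct maps
     (a, b) |-> (a + k, (-1)^k b + u + alpha a),
     (a, b) |-> (k - a, (-1)^k (a div 2 - b) + u - alpha a)      (k in Z/n, u, alpha in Z/m),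
   and starting from the identity every one of them is reached; so they are exactly the
   elements of H.  The orders of eta1, eta2 and their product are read off this normal form. *)

lemma (in group) generate_eq_of_right_closed:
  assumes A: "A \<subseteq> carrier G" and ord_A: "\<And>a. a \<in> A \<Longrightarrow> ord a \<noteq> 0"
    and S: "S \<subseteq> generate G A" and one_S: "\<one> \<in> S"
    and closed: "\<And>x a. x \<in> S \<Longrightarrow> a \<in> A \<Longrightarrow> x \<otimes> a \<in> S"
  shows "generate G A = S"
proof
  have S_carrier: "S \<subseteq> carrier G"
    using S generate_in_carrier[OF A] by blast
  have pow: "x \<otimes> a [^] j \<in> S" if "x \<in> S" "a \<in> A" for x a and j :: nat
  proof (induction j)
    case (Suc j)
    then have "(x \<otimes> a [^] j) \<otimes> a \<in> S" using closed that(2) by blast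
    moreover have "x \<in> carrier G" "a \<in> carrier G" using that S_carrier A by auto
    ultimately show ?case by (simp add: m_assoc)
  qed (use that S_carrier in auto)
  have inv_pow: "inv a = a [^] (ord a - 1)" if "a \<in> A" for a
  proof (rule inv_equality)
    have "a [^] (ord a - 1) \<otimes> a = a [^] ord a"
      using ord_A[OF that] by (metis Suc_pred' nat_pow_Suc neq0_conv)
    then show "a [^] (ord a - 1) \<otimes> a = \<one>"
      using that A by auto
  qed (use that A in auto)
  have "x \<otimes> h \<in> S" if "h \<in> generate G A" "x \<in> S" for h x
    using that
  proof (induction arbitrary: x rule: generate.induct)
    case one
    then show ?case using S_carrier by auto
  next
    case (incl h)
    then show ?case by (rule closed[rotated])
  next
    case (inv h)
    then show ?case by (simp add: pow inv_pow)
  next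
    case (eng h1 h2)
    have "h1 \<in> carrier G" "h2 \<in> carrier G"
      using eng.hyps generate_in_carrier[OF A] by auto
    then show ?case
      using eng.IH eng.prems S_carrier by (auto simp flip: m_assoc)
  qed
  then show "generate G A \<subseteq> S"
    using one_S generate_in_carrier[OF A] by fastforce
qed (rule S)

lemma (in group) ord_eq_2:
  assumes "x \<in> carrier G" "x \<otimes> x = \<one>" "x \<noteq> \<one>"
  shows "ord x = 2"
proof -
  have "x [^] (2::nat) = \<one>"
    using assms by (simp add: numeral_2_eq_2)
  then have "ord x dvd 2"
    using pow_eq_id[OF assms(1)] by blast
  moreover have "ord x \<noteq> 1"
    using ord_eq_1[OF assms(1)] assms(3) by blast
  ultimately show ?thesis
    using dvd_imp_le[of "ord x" 2] by (cases "ord x = 0") auto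
qed

definition coord_map ::
    "nat \<Rightarrow> nat \<Rightarrow> (int \<Rightarrow> int \<Rightarrow> int) \<Rightarrow> (int \<Rightarrow> int \<Rightarrow> int) \<Rightarrow> nat \<times> nat \<Rightarrow> nat \<times> nat" where
  "coord_map n m f g = (\<lambda>v \<in> verts n m.
     (nat (f (int (fst v) - 1) (int (snd v) - 1) mod int n) + 1,
      nat (g (int (fst v) - 1) (int (snd v) - 1) mod int m) + 1))"

lemma verts_coords:
  assumes "v \<in> verts n m"
  shows "0 \<le> int (fst v) - 1" "int (fst v) - 1 < int n" "0 \<le> int (snd v) - 1" "int (snd v) - 1 < int m"
  using assms by (auto simp: verts_def)

lemma coord_map_cong:
  assumes "\<And>a b. 0 \<le> a \<Longrightarrow> a < int n \<Longrightarrow> 0 \<le> b \<Longrightarrow> b < int m \<Longrightarrow> [f a b = f' a b] (mod int n)"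
    and "\<And>a b. 0 \<le> a \<Longrightarrow> a < int n \<Longrightarrow> 0 \<le> b \<Longrightarrow> b < int m \<Longrightarrow> [g a b = g' a b] (mod int m)"
  shows "coord_map n m f g = coord_map n m f' g'"
  unfolding coord_map_def
  using assms[OF verts_coords] by (intro restrict_ext) (simp add: cong_def)

lemma coord_map_coords:
  assumes "n > 0" "m > 0" "v \<in> verts n m"
  shows "int (fst (coord_map n m f g v)) - 1 = f (int (fst v) - 1) (int (snd v) - 1) mod int n"
    and "int (snd (coord_map n m f g v)) - 1 = g (int (fst v) - 1) (int (snd v) - 1) mod int m"
  using assms by (simp_all add: coord_map_def)

lemma coord_map_eq_iff:
  assumes "n > 0" "m > 0"
  shows "coord_map n m f g = coord_map n m f' g' \<longleftrightarrow>
    (\<forall>a \<in> {0..<int n}. \<forall>b \<in> {0..<int m}. [f a b = f' a b] (mod int n) \<and> [g a b = g' a b] (mod int m))"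
proof
  assume eq: "coord_map n m f g = coord_map n m f' g'"
  show "\<forall>a \<in> {0..<int n}. \<forall>b \<in> {0..<int m}. [f a b = f' a b] (mod int n) \<and> [g a b = g' a b] (mod int m)"
  proof (intro ballI)
    fix a b assume a: "a \<in> {0..<int n}" and b: "b \<in> {0..<int m}"
    have v: "(nat a + 1, nat b + 1) \<in> verts n m" using a b by (auto simp: verts_def)
    show "[f a b = f' a b] (mod int n) \<and> [g a b = g' a b] (mod int m)"
      using coord_map_coords[OF assms v, of f g] coord_map_coords[OF assms v, of f' g'] a b
      by (simp add: eq cong_def)
  qed
qed (auto intro: coord_map_cong)

lemma coord_map_in_verts:
  assumes "n > 0" "m > 0" "v \<in> verts n m"
  shows "coord_map n m f g v \<in> verts n m"
  using assms by (auto simp: coord_map_def verts_def nat_less_iff Suc_le_eq)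

lemma compose_coord_map:
  assumes "n > 0" "m > 0"
  shows "compose (verts n m) (coord_map n m f g) (coord_map n m f' g') =
    coord_map n m (\<lambda>a b. f (f' a b mod int n) (g' a b mod int m)) (\<lambda>a b. g (f' a b mod int n) (g' a b mod int m))"
proof (intro ext, goal_cases)
  case (1 v)
  show ?case
    using coord_map_in_verts[OF assms, of v f' g'] coord_map_coords[OF assms, of v f' g']
    by (cases "v \<in> verts n m") (simp_all add: compose_def coord_map_def)
qed

lemma coord_map_id: "coord_map n m (\<lambda>a b. a) (\<lambda>a b. b) = (\<lambda>v \<in> verts n m. v)"
  unfolding coord_map_def by (intro restrict_ext) (auto simp: verts_def)

lemma carrier_AutC:
  "carrier (AutC n m) =
    {f \<in> Bij (verts n m). \<forall>u \<in> verts n m. \<forall>v \<in> verts n m. cadj n u v \<longleftrightarrow> cadj n (f u) (f v)}"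
  by (simp add: AutC_def BijGroup_def)

lemma mult_AutC:
  "f \<in> carrier (AutC n m) \<Longrightarrow> g \<in> carrier (AutC n m) \<Longrightarrow> f \<otimes>\<^bsub>AutC n m\<^esub> g = compose (verts n m) f g"
  by (auto simp: AutC_def BijGroup_def)

lemma one_AutC: "\<one>\<^bsub>AutC n m\<^esub> = (\<lambda>v \<in> verts n m. v)"
  by (simp add: AutC_def BijGroup_def)

lemma inv_into_preserves_rel:
  assumes "bij_betw f S S" and "\<forall>u \<in> S. \<forall>v \<in> S. R u v \<longleftrightarrow> R (f u) (f v)"
    and "u \<in> S" "v \<in> S"
  shows "R u v \<longleftrightarrow> R (inv_into S f u) (inv_into S f v)"
  using assms bij_betw_inv_into_right[OF assms(1)] bij_betwE[OF bij_betw_inv_into[OF assms(1)]]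
  by metis

lemma group_AutC: "group (AutC n m)"
proof -
  let ?V = "verts n m"
  interpret Bij: group "BijGroup ?V" by (rule group_BijGroup)
  have "subgroup (carrier (AutC n m)) (BijGroup ?V)"
  proof (rule Bij.subgroupI)
    have "(\<lambda>v \<in> ?V. v) \<in> carrier (AutC n m)"
      by (simp add: carrier_AutC id_Bij)
    then show "carrier (AutC n m) \<noteq> {}" by blast
  next
    fix f assume "f \<in> carrier (AutC n m)"
    then have f: "f \<in> Bij ?V" and pres: "\<forall>u \<in> ?V. \<forall>v \<in> ?V. cadj n u v \<longleftrightarrow> cadj n (f u) (f v)"
      by (simp_all add: carrier_AutC)
    then have "\<forall>u \<in> ?V. \<forall>v \<in> ?V. cadj n u v \<longleftrightarrow> cadj n (inv_into ?V f u) (inv_into ?V f v)"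
      using inv_into_preserves_rel[of f ?V] by (simp add: Bij_def)
    then show "inv\<^bsub>BijGroup ?V\<^esub> f \<in> carrier (AutC n m)"
      using restrict_inv_into_Bij[OF f] by (simp add: carrier_AutC inv_BijGroup[OF f])
  next
    fix f g assume "f \<in> carrier (AutC n m)" "g \<in> carrier (AutC n m)"
    then have "compose ?V f g \<in> carrier (AutC n m)"
      using compose_Bij[of f ?V g] Bij_imp_funcset[of g ?V]
      by (auto simp: carrier_AutC compose_def Pi_def)
    then show "f \<otimes>\<^bsub>BijGroup ?V\<^esub> g \<in> carrier (AutC n m)"
      using \<open>f \<in> carrier (AutC n m)\<close> \<open>g \<in> carrier (AutC n m)\<close>
      by (simp add: carrier_AutC BijGroup_def)
  qed (auto simp: carrier_AutC BijGroup_def)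
  then show ?thesis
    using Bij.subgroup_imp_group by (simp add: AutC_def)
qed

lemma cadj_iff_dvd:
  "cadj n u v \<longleftrightarrow> int n dvd int (fst u) - int (fst v) - 1 \<or> int n dvd int (fst u) - int (fst v) + 1"
  by (simp add: cadj_def cong_def[symmetric] cong_int_iff[symmetric] cong_iff_dvd_diff algebra_simps)

lemma cong_cancel_sign:
  fixes \<sigma> x y N :: int
  assumes "\<sigma> \<in> {1, -1}" "[\<sigma> * x + c = \<sigma> * y + c] (mod N)"
  shows "[x = y] (mod N)"
  using assms by (auto simp: cong_add_rcancel cong_minus_minus_iff)

lemma inj_on_coord_map:
  fixes \<sigma> \<tau> k :: int
  assumes "n > 0" "m > 0" "\<sigma> \<in> {1, -1}" "\<tau> \<in> {1, -1}"
  shows "inj_on (coord_map n m (\<lambda>a b. \<sigma> * a + k) (\<lambda>a b. \<tau> * b + h a)) (verts n m)"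
proof (rule inj_onI)
  let ?\<phi> = "coord_map n m (\<lambda>a b. \<sigma> * a + k) (\<lambda>a b. \<tau> * b + h a)"
  note coords = coord_map_coords[OF assms(1,2)]
  fix u v assume u: "u \<in> verts n m" and v: "v \<in> verts n m" and eq: "?\<phi> u = ?\<phi> v"
  have "[\<sigma> * (int (fst u) - 1) + k = \<sigma> * (int (fst v) - 1) + k] (mod int n)"
    using arg_cong[OF eq, of "\<lambda>w. int (fst w) - 1"] unfolding coords(1)[OF u] coords(1)[OF v] cong_def .
  then have fst_eq: "int (fst u) - 1 = int (fst v) - 1"
    using cong_cancel_sign assms(3) verts_coords[OF u] verts_coords[OF v] cong_less_imp_eq_int by blast
  have "[\<tau> * (int (snd u) - 1) + h (int (fst v) - 1) = \<tau> * (int (snd v) - 1) + h (int (fst v) - 1)] (mod int m)"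
    using arg_cong[OF eq, of "\<lambda>w. int (snd w) - 1"] fst_eq unfolding coords(2)[OF u] coords(2)[OF v] cong_def
    by simp
  then have "int (snd u) - 1 = int (snd v) - 1"
    using cong_cancel_sign assms(4) verts_coords[OF u] verts_coords[OF v] cong_less_imp_eq_int by blast
  with fst_eq show "u = v" by (simp add: prod_eq_iff)
qed

lemma cadj_coord_map_iff:
  fixes \<sigma> k :: int
  assumes "n > 0" "m > 0" "\<sigma> \<in> {1, -1}" and u: "u \<in> verts n m" and v: "v \<in> verts n m"
  shows "cadj n (coord_map n m (\<lambda>a b. \<sigma> * a + k) g u) (coord_map n m (\<lambda>a b. \<sigma> * a + k) g v) \<longleftrightarrow> cadj n u v"
proof -
  let ?\<phi> = "coord_map n m (\<lambda>a b. \<sigma> * a + k) g"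
  have img: "int (fst (?\<phi> w)) = (\<sigma> * (int (fst w) - 1) + k) mod int n + 1" if "w \<in> verts n m" for w
    using coord_map_coords(1)[OF assms(1,2) that, of "\<lambda>a b. \<sigma> * a + k" g] by simp
  have shift: "int n dvd int (fst (?\<phi> u)) - int (fst (?\<phi> v)) - c \<longleftrightarrow>
      int n dvd \<sigma> * (int (fst u) - int (fst v)) - c" for c
  proof (rule cong_dvd_iff)
    have "[int (fst (?\<phi> u)) - int (fst (?\<phi> v)) - c =
        (\<sigma> * (int (fst u) - 1) + k + 1) - (\<sigma> * (int (fst v) - 1) + k + 1) - c] (mod int n)"
      unfolding img[OF u] img[OF v] by (intro cong_diff cong_add cong_refl) simp_all
    then show "[int (fst (?\<phi> u)) - int (fst (?\<phi> v)) - c = \<sigma> * (int (fst u) - int (fst v)) - c] (mod int n)"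
      by (simp add: algebra_simps)
  qed
  have dvd_swap: "int n dvd y - x - 1 \<longleftrightarrow> int n dvd x - y + 1" "int n dvd y - x + 1 \<longleftrightarrow> int n dvd x - y - 1"
    for x y :: int
    using dvd_minus_iff[of "int n" "x - y + 1"] dvd_minus_iff[of "int n" "x - y - 1"] by (simp_all add: algebra_simps)
  from assms(3) show ?thesis
    unfolding cadj_iff_dvd shift[of 1] shift[of "-1", simplified]
    using dvd_swap[of "int (fst u)" "int (fst v)"] by auto
qed

lemma coord_map_in_AutC:
  fixes \<sigma> \<tau> k :: int
  assumes "n > 0" "m > 0" "\<sigma> \<in> {1, -1}" "\<tau> \<in> {1, -1}"
  shows "coord_map n m (\<lambda>a b. \<sigma> * a + k) (\<lambda>a b. \<tau> * b + h a) \<in> carrier (AutC n m)"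
proof -
  let ?V = "verts n m" and ?\<phi> = "coord_map n m (\<lambda>a b. \<sigma> * a + k) (\<lambda>a b. \<tau> * b + h a)"
  have "?\<phi> ` ?V \<subseteq> ?V"
    using coord_map_in_verts[OF assms(1,2)] by blast
  with inj_on_coord_map[OF assms] have "?\<phi> \<in> Bij ?V"
    using endo_inj_surj[of ?V ?\<phi>] by (simp add: Bij_def bij_betw_def coord_map_def verts_def)
  then show ?thesis
    using cadj_coord_map_iff[OF assms(1-3)] by (simp add: carrier_AutC)
qed

lemma coord_map_eqI:
  assumes "\<And>i j. (i, j) \<in> verts n m \<Longrightarrow> int (fst (F (i, j))) - 1 = f (int i - 1) (int j - 1) mod int n"
    and "\<And>i j. (i, j) \<in> verts n m \<Longrightarrow> int (snd (F (i, j))) - 1 = g (int i - 1) (int j - 1) mod int m"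
  shows "(\<lambda>v \<in> verts n m. F v) = coord_map n m f g"
  unfolding coord_map_def
proof (intro restrict_ext)
  fix v assume v: "v \<in> verts n m"
  then obtain i j where ij: "v = (i, j)" and "n > 0" "m > 0" by (auto simp: verts_def)
  then have "0 \<le> f (int i - 1) (int j - 1) mod int n" "0 \<le> g (int i - 1) (int j - 1) mod int m"
    by simp_all
  with assms[of i j] v show "F v = (nat (f (int (fst v) - 1) (int (snd v) - 1) mod int n) + 1,
      nat (g (int (fst v) - 1) (int (snd v) - 1) mod int m) + 1)"
    unfolding ij by (simp add: prod_eq_iff) linarith
qed

lemma tperm_coord:
  assumes "1 \<le> j" "j \<le> m"
  shows "int (tperm m j) - 1 = - (int j - 1) mod int m"
proof (cases "j = 1")
  case False
  have "(int m + 1 - int j) mod int m = - (int j - 1) mod int m"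
    using mod_add_self2[of "- (int j - 1)" "int m"] by (simp add: algebra_simps)
  moreover have "(int m + 1 - int j) mod int m = int m + 1 - int j"
    using assms False by (intro mod_pos_pos_trivial) auto
  ultimately have "- (int j - 1) mod int m = int m + 1 - int j" by simp
  then show ?thesis using assms False by (simp add: tperm_def of_nat_diff)
qed (simp add: tperm_def)

lemma zperm_eq_tperm: "zperm = tperm"
  by (simp add: fun_eq_iff zperm_def tperm_def)

lemma rperm_coord: "int (rperm n i) - 1 = (int i - 1 + 1) mod int n"
  by (simp add: rperm_def of_nat_mod)

lemma cperm_power_coord:
  assumes "1 \<le> j" "j \<le> m"
  shows "int ((cperm m ^^ k) j) - 1 = (int j - 1 + int k) mod int m"
proof (induction k)
  case 0
  then show ?case using assms by simp
next
  case (Suc k)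
  then show ?case
    by (simp add: cperm_def of_nat_mod mod_simps algebra_simps flip: Suc)
qed

lemma eta1_coord: "eta1 n m = coord_map n m (\<lambda>a b. a + 1) (\<lambda>a b. - b)"
  unfolding eta1_def by (rule coord_map_eqI) (auto simp: verts_def rperm_coord tperm_coord)

lemma eta2_coord: "eta2 n m = coord_map n m (\<lambda>a b. - a) (\<lambda>a b. a div 2 - b)"
  unfolding eta2_def
proof (rule coord_map_eqI, goal_cases)
  case (1 i j)
  then show ?case by (simp add: verts_def zperm_eq_tperm tperm_coord)
next
  case (2 i j)
  then have i: "1 \<le> i" and j: "1 \<le> j" "j \<le> m" by (auto simp: verts_def)
  then have "1 \<le> tperm m j" "tperm m j \<le> m" by (auto simp: tperm_def)
  with i j have "int ((cperm m ^^ ((i - 1) div 2)) (tperm m j)) - 1 =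
      (- (int j - 1) mod int m + (int i - 1) div 2) mod int m"
    by (simp add: cperm_power_coord tperm_coord of_nat_div of_nat_diff)
  then show ?case by (simp add: mod_simps algebra_simps)
qed

definition psign :: "int \<Rightarrow> int" where
  "psign k = (if even k then 1 else -1)"

lemma psign_succ [simp]: "psign (k + 1) = - psign k"
  and psign_pred [simp]: "psign (k - 1) = - psign k"
  and psign_0 [simp]: "psign 0 = 1"
  and psign_1 [simp]: "psign 1 = -1"
  and psign_range: "psign k \<in> {1, -1}"
  by (simp_all add: psign_def)

definition H_elem :: "nat \<Rightarrow> nat \<Rightarrow> bool \<Rightarrow> int \<Rightarrow> int \<Rightarrow> int \<Rightarrow> nat \<times> nat \<Rightarrow> nat \<times> nat" where
  "H_elem n m flip k u \<alpha> = coord_map n m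
     (\<lambda>a b. if flip then k - a else a + k)
     (\<lambda>a b. if flip then psign k * (a div 2 - b) + u - \<alpha> * a else psign k * b + u + \<alpha> * a)"

definition H_params :: "nat \<Rightarrow> nat \<Rightarrow> (bool \<times> int \<times> int \<times> int) set" where
  "H_params n m = UNIV \<times> {0..<int n} \<times> {0..<int m} \<times> {0..<int m}"

lemma H_elem_in_AutC:
  assumes "n > 0" "m > 0"
  shows "H_elem n m flip k u \<alpha> \<in> carrier (AutC n m)"
proof -
  have "H_elem n m flip k u \<alpha> = coord_map n m
      (\<lambda>a b. (if flip then -1 else 1) * a + k)
      (\<lambda>a b. (if flip then - psign k else psign k) * b +
        (if flip then psign k * (a div 2) + u - \<alpha> * a else u + \<alpha> * a))"
    unfolding H_elem_def by (cases flip) (simp_all add: algebra_simps)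
  also have "\<dots> \<in> carrier (AutC n m)"
    by (rule coord_map_in_AutC[OF assms]) (use psign_range[of k] in auto)
  finally show ?thesis .
qed

locale eta_group =
  fixes n m :: nat
  assumes two_m_dvd_n: "2 * m dvd n" and n_gt_2: "2 < n"
begin

sublocale aut: group "AutC n m"
  by (rule group_AutC)

lemma n_pos: "n > 0"
  using n_gt_2 by simp

lemma m_pos: "m > 0"
  using two_m_dvd_n n_gt_2 by (auto intro!: gr0I)

lemma two_dvd_n: "(2::int) dvd int n" and m_dvd_n: "int m dvd int n"
  using dvd_mult_left[OF two_m_dvd_n] dvd_mult_right[OF two_m_dvd_n] by simp_all

lemma psign_cong:
  assumes "[k = k'] (mod int n)"
  shows "psign k = psign k'"
proof -
  have "[k = k'] (mod 2)"
    using assms two_dvd_n by (rule cong_dvd_modulus)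
  then show ?thesis by (simp add: psign_def cong_def even_iff_mod_2_eq_zero)
qed

lemma mod_n_cong: "[x mod int n = x] (mod int m)"
  using cong_dvd_modulus[OF _ m_dvd_n] by simp

lemma eta1_eq: "eta1 n m = H_elem n m False 1 0 0"
  by (simp add: eta1_coord H_elem_def)

lemma eta2_eq: "eta2 n m = H_elem n m True 0 0 0"
  by (simp add: eta2_coord H_elem_def)

lemma one_eq: "\<one>\<^bsub>AutC n m\<^esub> = H_elem n m False 0 0 0"
  by (simp add: one_AutC H_elem_def flip: coord_map_id)

lemma eta1_in_carrier: "eta1 n m \<in> carrier (AutC n m)"
  and eta2_in_carrier: "eta2 n m \<in> carrier (AutC n m)"
  by (simp_all add: eta1_eq eta2_eq H_elem_in_AutC n_pos m_pos)

lemma H_elem_eq_iff: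
  "H_elem n m flip k u \<alpha> = H_elem n m flip' k' u' \<alpha>' \<longleftrightarrow>
    flip = flip' \<and> [k = k'] (mod int n) \<and> [u = u'] (mod int m) \<and> [\<alpha> = \<alpha>'] (mod int m)"
    (is "?eq \<longleftrightarrow> ?params")
proof
  assume ?eq
  note agree = this[unfolded H_elem_def coord_map_eq_iff[OF n_pos m_pos], rule_format]
  have at_0: "[k = k'] (mod int n)" "[u = u'] (mod int m)"
    using agree[of 0 0] n_pos m_pos by (simp_all split: if_splits)
  have at_1: "[(if flip then k - 1 else k + 1) = (if flip' then k' - 1 else k' + 1)] (mod int n)"
      "[(if flip then u - \<alpha> else u + \<alpha>) = (if flip' then u' - \<alpha>' else u' + \<alpha>')] (mod int m)"
    using agree[of 1 0] n_gt_2 m_pos by (simp_all add: add.commute split: if_splits)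
  have flip_eq: "flip = flip'"
  proof (rule ccontr)
    assume "flip \<noteq> flip'"
    moreover have "[k - (if flip then k - 1 else k + 1) = k' - (if flip' then k' - 1 else k' + 1)] (mod int n)"
      by (rule cong_diff[OF at_0(1) at_1(1)])
    ultimately have "[1 = -1] (mod int n) \<or> [-1 = 1] (mod int n)"
      by (cases flip) simp_all
    then have "int n dvd 2"
      by (auto simp: cong_iff_dvd_diff)
    then show False
      using n_gt_2 by (auto dest: zdvd_imp_le)
  qed
  have "[\<alpha> = \<alpha>'] (mod int m)"
  proof (cases flip)
    case True
    then show ?thesis using cong_diff[OF at_0(2) at_1(2)] flip_eq by simp
  next
    case False
    then show ?thesis using cong_diff[OF at_1(2) at_0(2)] flip_eq by simp
  qed
  with flip_eq at_0 show ?params by blast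
next
  assume ?params
  then show ?eq
    unfolding H_elem_def by (intro coord_map_cong) (auto simp: psign_cong intro!: cong_add cong_mult cong_diff)
qed

text \<open>This is where \<open>2 * m dvd n\<close> enters: wrapping around from \<open>n - 1\<close> to \<open>0\<close> shifts \<open>a div 2\<close>
  by \<open>n div 2\<close>, a multiple of \<open>m\<close>.\<close>

lemma half_succ_mod_cong:
  assumes "0 \<le> a" "a < int n"
  shows "[((a + 1) mod int n) div 2 = a - a div 2] (mod int m)"
proof (cases "a + 1 < int n")
  case True
  then have "(a + 1) mod int n = a + 1" using assms by simp
  moreover have "(a + 1) div 2 = a - a div 2" by presburger
  ultimately show ?thesis by simp
next
  case False
  obtain q where q: "n = 2 * m * q" using two_m_dvd_n by blast
  define P where "P = int m * int q"
  have "a + 1 = int n" using False assms by simp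
  then have "(a + 1) mod int n = 0" and "a = 2 * P - 1" by (simp_all add: q P_def)
  moreover have "a = 2 * P - 1 \<Longrightarrow> a - a div 2 = P" by presburger
  ultimately have "((a + 1) mod int n) div 2 = 0" "a - a div 2 = P" by simp_all
  then show ?thesis by (simp add: cong_iff_dvd_diff P_def)
qed

lemma half_neg_mod_cong:
  assumes "0 \<le> a" "a < int n"
  shows "[((- a) mod int n) div 2 = a div 2 - a] (mod int m)"
proof (cases "a = 0")
  case False
  obtain q where q: "n = 2 * m * q" using two_m_dvd_n by blast
  define P where "P = int m * int q"
  have "(- a) mod int n = (int n - a) mod int n" by (simp add: mod_simps)
  also have "\<dots> = int n - a" using False assms by (intro mod_pos_pos_trivial) auto
  finally have "(- a) mod int n = 2 * P - a" by (simp add: q P_def)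
  moreover have "(2 * P - a) div 2 = P + (a div 2 - a)" by presburger
  ultimately have "((- a) mod int n) div 2 = P + (a div 2 - a)" by simp
  then show ?thesis by (simp add: cong_iff_dvd_diff P_def)
qed simp

lemma mult_H_elem:
  "x \<in> carrier (AutC n m) \<Longrightarrow> H_elem n m flip k u \<alpha> \<otimes>\<^bsub>AutC n m\<^esub> x = compose (verts n m) (H_elem n m flip k u \<alpha>) x"
  by (simp add: mult_AutC H_elem_in_AutC n_pos m_pos)

lemma H_elem_rot_mult_eta1:
  "H_elem n m False k u \<alpha> \<otimes>\<^bsub>AutC n m\<^esub> eta1 n m = H_elem n m False (k + 1) (u + \<alpha>) \<alpha>"
  unfolding mult_H_elem[OF eta1_in_carrier]
  unfolding H_elem_def eta1_coord compose_coord_map[OF n_pos m_pos] if_False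
proof (rule coord_map_cong, goal_cases)
  case (1 a b)
  show ?case by (simp add: cong_def mod_simps ac_simps)
next
  case (2 a b)
  have "[psign k * (- b mod int m) + u + \<alpha> * ((a + 1) mod int n) = psign k * (- b) + u + \<alpha> * (a + 1)] (mod int m)"
    by (intro cong_add cong_mult cong_refl mod_n_cong) simp
  then show ?case unfolding psign_succ by (simp add: algebra_simps)
qed

lemma H_elem_refl_mult_eta1:
  "H_elem n m True k u \<alpha> \<otimes>\<^bsub>AutC n m\<^esub> eta1 n m = H_elem n m True (k - 1) (u - \<alpha>) (\<alpha> - psign k)"
  unfolding mult_H_elem[OF eta1_in_carrier]
  unfolding H_elem_def eta1_coord compose_coord_map[OF n_pos m_pos] if_True
proof (rule coord_map_cong, goal_cases)
  case (1 a b)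
  show ?case by (simp add: cong_def mod_simps algebra_simps)
next
  case (2 a b)
  have "[psign k * ((a + 1) mod int n div 2 - - b mod int m) + u - \<alpha> * ((a + 1) mod int n) =
      psign k * ((a - a div 2) - - b) + u - \<alpha> * (a + 1)] (mod int m)"
    using 2 by (intro cong_add cong_diff cong_mult cong_refl mod_n_cong half_succ_mod_cong) simp_all
  then show ?case unfolding psign_pred by (simp add: algebra_simps)
qed

lemma H_elem_rot_mult_eta2:
  "H_elem n m False k u \<alpha> \<otimes>\<^bsub>AutC n m\<^esub> eta2 n m = H_elem n m True k u \<alpha>"
  unfolding mult_H_elem[OF eta2_in_carrier]
  unfolding H_elem_def eta2_coord compose_coord_map[OF n_pos m_pos] if_True if_False
proof (rule coord_map_cong, goal_cases)
  case (1 a b)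
  show ?case by (simp add: cong_def mod_simps algebra_simps)
next
  case (2 a b)
  have "[psign k * ((a div 2 - b) mod int m) + u + \<alpha> * (- a mod int n) =
      psign k * (a div 2 - b) + u + \<alpha> * (- a)] (mod int m)"
    by (intro cong_add cong_mult cong_refl mod_n_cong) simp
  then show ?case by (simp add: algebra_simps)
qed

lemma H_elem_refl_mult_eta2:
  "H_elem n m True k u \<alpha> \<otimes>\<^bsub>AutC n m\<^esub> eta2 n m = H_elem n m False k u (\<alpha> - psign k)"
  unfolding mult_H_elem[OF eta2_in_carrier]
  unfolding H_elem_def eta2_coord compose_coord_map[OF n_pos m_pos] if_True if_False
proof (rule coord_map_cong, goal_cases)
  case (1 a b)
  show ?case by (simp add: cong_def mod_simps algebra_simps)
next
  case (2 a b)
  have "[psign k * (- a mod int n div 2 - (a div 2 - b) mod int m) + u - \<alpha> * (- a mod int n) =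
      psign k * ((a div 2 - a) - (a div 2 - b)) + u - \<alpha> * (- a)] (mod int m)"
    using 2 by (intro cong_add cong_diff cong_mult cong_refl mod_n_cong half_neg_mod_cong) simp_all
  then show ?case by (simp add: algebra_simps)
qed

lemma eta1_pow: "eta1 n m [^]\<^bsub>AutC n m\<^esub> j = H_elem n m False (int j) 0 0"
  by (induction j) (simp_all add: one_eq H_elem_rot_mult_eta1 add.commute)

lemma eta2_pow_even: "eta2 n m [^]\<^bsub>AutC n m\<^esub> (2 * j) = H_elem n m False 0 0 (- int j)"
proof (induction j)
  case (Suc j)
  have "eta2 n m [^]\<^bsub>AutC n m\<^esub> (2 * Suc j) =
      eta2 n m [^]\<^bsub>AutC n m\<^esub> (2 * j) \<otimes>\<^bsub>AutC n m\<^esub> eta2 n m \<otimes>\<^bsub>AutC n m\<^esub> eta2 n m"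
    by (simp add: aut.nat_pow_Suc)
  also have "\<dots> = H_elem n m False 0 0 (- int j - 1)"
    by (simp add: Suc.IH H_elem_rot_mult_eta2 H_elem_refl_mult_eta2)
  also have "\<dots> = H_elem n m False 0 0 (- int (Suc j))"
    by (rule arg_cong[where f = "H_elem n m False 0 0"]) simp
  finally show ?case .
qed (simp add: one_eq)

lemma eta2_pow_odd: "eta2 n m [^]\<^bsub>AutC n m\<^esub> (2 * j + 1) = H_elem n m True 0 0 (- int j)"
  by (simp add: eta2_pow_even H_elem_rot_mult_eta2)

lemma ord_eta1: "aut.ord (eta1 n m) = n"
proof -
  have "eta1 n m [^]\<^bsub>AutC n m\<^esub> j = \<one>\<^bsub>AutC n m\<^esub> \<longleftrightarrow> n dvd j" for j
    by (simp add: eta1_pow one_eq H_elem_eq_iff cong_0_iff)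
  then show ?thesis
    using aut.ord_unique[OF eta1_in_carrier] by blast
qed

lemma ord_eta2: "aut.ord (eta2 n m) = 2 * m"
proof -
  have "eta2 n m [^]\<^bsub>AutC n m\<^esub> j = \<one>\<^bsub>AutC n m\<^esub> \<longleftrightarrow> 2 * m dvd j" for j
  proof (cases "even j")
    case True
    then obtain i where "j = 2 * i" by blast
    then show ?thesis
      by (simp add: eta2_pow_even one_eq H_elem_eq_iff cong_sym_eq[of 0] cong_0_iff)
  next
    case False
    then obtain i where "j = 2 * i + 1" using oddE by blast
    then have "eta2 n m [^]\<^bsub>AutC n m\<^esub> j \<noteq> \<one>\<^bsub>AutC n m\<^esub>"
      by (simp only: eta2_pow_odd one_eq H_elem_eq_iff) simp
    moreover have "\<not> 2 * m dvd j"
      using False by (auto dest: dvd_mult_left)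
    ultimately show ?thesis by simp
  qed
  then show ?thesis
    using aut.ord_unique[OF eta2_in_carrier] by blast
qed

lemma ord_eta2_mult_eta1: "aut.ord (eta2 n m \<otimes>\<^bsub>AutC n m\<^esub> eta1 n m) = 2"
proof (rule aut.ord_eq_2)
  have prod: "eta2 n m \<otimes>\<^bsub>AutC n m\<^esub> eta1 n m = H_elem n m True (-1) 0 (-1)"
    by (simp add: eta2_eq H_elem_refl_mult_eta1)
  then show "eta2 n m \<otimes>\<^bsub>AutC n m\<^esub> eta1 n m \<in> carrier (AutC n m)"
    by (simp add: H_elem_in_AutC n_pos m_pos)
  show "eta2 n m \<otimes>\<^bsub>AutC n m\<^esub> eta1 n m \<noteq> \<one>\<^bsub>AutC n m\<^esub>"
    by (simp add: prod one_eq H_elem_eq_iff)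
  have "H_elem n m True (-1) 0 (-1) \<otimes>\<^bsub>AutC n m\<^esub> (eta2 n m \<otimes>\<^bsub>AutC n m\<^esub> eta1 n m) =
      H_elem n m True (-1) 0 (-1) \<otimes>\<^bsub>AutC n m\<^esub> eta2 n m \<otimes>\<^bsub>AutC n m\<^esub> eta1 n m"
    by (simp add: aut.m_assoc H_elem_in_AutC n_pos m_pos eta1_in_carrier eta2_in_carrier)
  then show "(eta2 n m \<otimes>\<^bsub>AutC n m\<^esub> eta1 n m) \<otimes>\<^bsub>AutC n m\<^esub> (eta2 n m \<otimes>\<^bsub>AutC n m\<^esub> eta1 n m) = \<one>\<^bsub>AutC n m\<^esub>"
    by (simp add: prod H_elem_refl_mult_eta2 H_elem_rot_mult_eta1 one_eq psign_def)
qed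

context
  fixes S
  assumes eta1_closed: "\<And>x. x \<in> S \<Longrightarrow> x \<otimes>\<^bsub>AutC n m\<^esub> eta1 n m \<in> S"
    and eta2_closed: "\<And>x. x \<in> S \<Longrightarrow> x \<otimes>\<^bsub>AutC n m\<^esub> eta2 n m \<in> S"
begin

lemma rot_mult_eta1_pow_closed:
  "H_elem n m False k u \<alpha> \<in> S \<Longrightarrow> H_elem n m False (k + int j) (u + int j * \<alpha>) \<alpha> \<in> S"
proof (induction j)
  case (Suc j)
  from eta1_closed[OF Suc.IH[OF Suc.prems]] show ?case
    by (simp add: H_elem_rot_mult_eta1 algebra_simps)
qed simp

lemma rot_mult_eta2_sq_pow_closed:
  "H_elem n m False k u \<alpha> \<in> S \<Longrightarrow> H_elem n m False k u (\<alpha> - int j * psign k) \<in> S"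
proof (induction j)
  case (Suc j)
  from eta2_closed[OF eta2_closed[OF Suc.IH[OF Suc.prems]]] show ?case
    by (simp add: H_elem_rot_mult_eta2 H_elem_refl_mult_eta2 algebra_simps)
qed simp

lemma vertical_shift_closed:
  assumes "H_elem n m False 0 u 0 \<in> S"
  shows "H_elem n m False 0 (u + 1) 0 \<in> S"
proof -
  have "H_elem n m False 1 u 0 \<in> S"
    using rot_mult_eta1_pow_closed[OF assms, of 1] by simp
  then have "H_elem n m False 1 u 1 \<in> S"
    using rot_mult_eta2_sq_pow_closed[of 1 u 0 1] by simp
  then have "H_elem n m False 2 (u + 1) 1 \<in> S"
    using rot_mult_eta1_pow_closed[of 1 u 1 1] by simp
  then have "H_elem n m False 2 (u + 1) 0 \<in> S"
    using rot_mult_eta2_sq_pow_closed[of 2 "u + 1" 1 1] by (simp add: psign_def)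
  then have "H_elem n m False (int n) (u + 1) 0 \<in> S"
    using rot_mult_eta1_pow_closed[of 2 "u + 1" 0 "n - 2"] n_gt_2 by (simp add: of_nat_diff)
  moreover have "H_elem n m False (int n) (u + 1) 0 = H_elem n m False 0 (u + 1) 0"
    by (simp add: H_elem_eq_iff cong_def)
  ultimately show ?thesis by simp
qed

lemma H_elem_in_closed_set:
  assumes "\<one>\<^bsub>AutC n m\<^esub> \<in> S"
  shows "H_elem n m flip k u \<alpha> \<in> S"
proof -
  have "H_elem n m False 0 (int j) 0 \<in> S" for j
  proof (induction j)
    case (Suc j)
    then show ?case using vertical_shift_closed[OF Suc] by (simp add: add.commute)
  qed (use assms one_eq in simp)
  from rot_mult_eta1_pow_closed[OF this, of "nat (k mod int n)"]
  have "H_elem n m False (k mod int n) (int j) 0 \<in> S" for j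
    using n_pos by simp
  from rot_mult_eta2_sq_pow_closed[OF this]
  have base: "H_elem n m False (k mod int n) (int j) (- int i * psign k) \<in> S" for i j
    by (simp add: psign_cong[of "k mod int n" k] cong_def)
  define i where "i = nat (- \<alpha> * psign k mod int m)"
  have "[- int i * psign k = \<alpha>] (mod int m)"
    using m_pos psign_range[of k] by (auto simp: i_def cong_def mod_simps)
  then have "H_elem n m False (k mod int n) (int (nat (u mod int m))) (- int i * psign k) = H_elem n m False k u \<alpha>"
    using m_pos by (simp add: H_elem_eq_iff cong_def)
  with base have "H_elem n m False k u \<alpha> \<in> S" by metis
  moreover from eta2_closed[OF this] have "H_elem n m True k u \<alpha> \<in> S"
    by (simp add: H_elem_rot_mult_eta2)
  ultimately show ?thesis by (cases flip) simp_all
qed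

end

lemma H_elem_in_image_H_params:
  "H_elem n m flip k u \<alpha> \<in> (\<lambda>(flip, k, u, \<alpha>). H_elem n m flip k u \<alpha>) ` H_params n m"
  by (rule image_eqI[where x = "(flip, k mod int n, u mod int m, \<alpha> mod int m)"])
    (simp_all add: H_elem_eq_iff cong_def H_params_def n_pos m_pos)

lemma generate_eta_eq:
  "generate (AutC n m) {eta1 n m, eta2 n m} = (\<lambda>(flip, k, u, \<alpha>). H_elem n m flip k u \<alpha>) ` H_params n m"
proof (rule aut.generate_eq_of_right_closed)
  show "{eta1 n m, eta2 n m} \<subseteq> carrier (AutC n m)"
    using eta1_in_carrier eta2_in_carrier by blast
  show "aut.ord a \<noteq> 0" if "a \<in> {eta1 n m, eta2 n m}" for a
    using that ord_eta1 ord_eta2 n_pos m_pos by auto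
  have "H_elem n m flip k u \<alpha> \<in> generate (AutC n m) {eta1 n m, eta2 n m}" for flip k u \<alpha>
    by (rule H_elem_in_closed_set) (auto intro: generate.eng generate.incl generate.one)
  then show "(\<lambda>(flip, k, u, \<alpha>). H_elem n m flip k u \<alpha>) ` H_params n m \<subseteq> generate (AutC n m) {eta1 n m, eta2 n m}"
    by auto
  show "\<one>\<^bsub>AutC n m\<^esub> \<in> (\<lambda>(flip, k, u, \<alpha>). H_elem n m flip k u \<alpha>) ` H_params n m"
    unfolding one_eq by (rule H_elem_in_image_H_params)
  fix x a
  assume "x \<in> (\<lambda>(flip, k, u, \<alpha>). H_elem n m flip k u \<alpha>) ` H_params n m" and a: "a \<in> {eta1 n m, eta2 n m}"
  then obtain flip k u \<alpha> where "x = H_elem n m flip k u \<alpha>" by auto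
  with a show "x \<otimes>\<^bsub>AutC n m\<^esub> a \<in> (\<lambda>(flip, k, u, \<alpha>). H_elem n m flip k u \<alpha>) ` H_params n m"
    by (cases flip) (auto simp: H_elem_rot_mult_eta1 H_elem_refl_mult_eta1 H_elem_rot_mult_eta2
        H_elem_refl_mult_eta2 H_elem_in_image_H_params)
qed

lemma card_generate_eta: "card (generate (AutC n m) {eta1 n m, eta2 n m}) = 2 * m ^ 2 * n"
proof -
  have "inj_on (\<lambda>(flip, k, u, \<alpha>). H_elem n m flip k u \<alpha>) (H_params n m)"
    by (intro inj_onI) (auto simp: H_params_def H_elem_eq_iff cong_less_imp_eq_int)
  then have "card (generate (AutC n m) {eta1 n m, eta2 n m}) = card (H_params n m)"
    unfolding generate_eta_eq by (rule card_image)
  also have "\<dots> = 2 * m ^ 2 * n"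
    by (simp add: H_params_def card_cartesian_product power2_eq_square)
  finally show ?thesis .
qed

end

theorem lemma5p6:
  fixes m s n :: nat
  assumes "m \<ge> 3" and "odd m"
    and "s > 0" and "even s" and "\<not> 4 dvd s"
    and "n = s * m"
  shows "eta1 n m \<in> carrier (AutC n m)
    \<and> eta2 n m \<in> carrier (AutC n m)
    \<and> group.ord (AutC n m) (eta1 n m) = n
    \<and> group.ord (AutC n m) (eta2 n m) = 2 * m
    \<and> group.ord (AutC n m) (eta2 n m \<otimes>\<^bsub>AutC n m\<^esub> eta1 n m) = 2
    \<and> card (generate (AutC n m) {eta1 n m, eta2 n m}) = 2 * m^2 * n"
proof -
  interpret eta_group n m
  proof
    show "2 * m dvd n" using assms(4,6) by auto
    have "1 * 3 \<le> s * m" using assms(1,3) by (intro mult_le_mono) auto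
    then show "2 < n" using assms(6) by simp
  qed
  show ?thesis
    using eta1_in_carrier eta2_in_carrier ord_eta1 ord_eta2 ord_eta2_mult_eta1 card_generate_eta by blast
qed
end
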